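(* Let $(M,\varphi,\xi,\eta,g)$ be a $(2n+1)$-dimensional Sasaki-like almost contact B-metric manifold admitting a Ricci-like soliton with potential $\xi$ and constants $(\lambda,\mu,\nu)$. Then the manifold is locally Ricci symmetric (i.e. $\nabla\rho=0$) if and only if $(\lambda,\mu,\nu)=(-2n,1,-1)$, i.e. if and only if it is an Einstein manifold.
   Context: An almost contact B-metric manifold $(M,\varphi,\xi,\eta,g)$ is a $(2n+1)$-dimensional manifold with a $(1,1)$-tensor $\varphi$, a vector field $\xi$, a 1-form $\eta$ and a pseudo-Riemannian metric $g$ of signature $(n+1,n)$ such that $\varphi\xi=0$, $\varphi^2=-\mathrm{Id}+\eta\otimes\xi$, $\eta\circ\varphi=0$, $\eta(\xi)=1$, and $g(\varphi x,\varphi y)=-g(x,y)+\eta(x)\eta(y)$. The associated B-metric is $\tilde g(x,y)=g(x,\varphi y)+\eta(x)\eta(y)$. With $\nabla$ the Levi-Civita connection of $g$, the manifold is Sasaki-like if $(\nabla_x\varphi)y=-g(x,y)\xi-\eta(y)x+2\eta(x)\eta(y)\xi$. Let $\rho$ be the Ricci tensor of $g$. It admits a Ricci-like soliton with potential vector field $v$ and constants $(\lambda,\mu,\nu)$ if $\frac12\mathcal L_v g+\rho+\lambda g+\mu\tilde g+\nu\,\eta\otimes\eta=0$, where $\mathcal L$ is the Lie derivative. The manifold is Einstein if $\rho$ is a constant multiple of $g$. *)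

theory Defs
  imports "HOL-Analysis.Analysis"
begin

text \<open>Local coordinate formulation: a chart domain U (open subset of real^'m)
 and all tensor fields given by their component functions.
 Index conventions: G p i j = g_ij, Phi p k j = phi^k_j, Xi p k = xi^k, Eta p i = eta_i.\<close>

definition pd :: "(real^'m \<Rightarrow> real) \<Rightarrow> 'm \<Rightarrow> real^'m \<Rightarrow> real" where
  "pd f i p = deriv (\<lambda>t. f (p + t *\<^sub>R axis i 1)) 0"

fun Ck :: "nat \<Rightarrow> (real^'m) set \<Rightarrow> (real^'m \<Rightarrow> real) \<Rightarrow> bool" where
  "Ck 0 U f = continuous_on U f"
| "Ck (Suc k) U f = (f differentiable_on U \<and> (\<forall>i. Ck k U (pd f i)))"

definition smooth_chart :: "(real^'m) set \<Rightarrow> (real^'m \<Rightarrow> real) \<Rightarrow> bool" where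
  "smooth_chart U f \<longleftrightarrow> (\<forall>k. Ck k U f)"

definition kdelta :: "'m \<Rightarrow> 'm \<Rightarrow> real" where
  "kdelta i j = (if i = j then 1 else 0)"

definition bil :: "('m \<Rightarrow> 'm \<Rightarrow> real) \<Rightarrow> real^'m \<Rightarrow> real^'m \<Rightarrow> real" where
  "bil A x y = (\<Sum>i\<in>UNIV. \<Sum>j\<in>UNIV. x$i * A i j * y$j)"

definition has_signature :: "('m::finite \<Rightarrow> 'm \<Rightarrow> real) \<Rightarrow> nat \<Rightarrow> nat \<Rightarrow> bool" where
  "has_signature A p q \<longleftrightarrow> (\<exists>e :: 'm \<Rightarrow> real^'m.
      (\<forall>i j. i \<noteq> j \<longrightarrow> bil A (e i) (e j) = 0) \<and>
      (\<forall>i. bil A (e i) (e i) = 1 \<or> bil A (e i) (e i) = -1) \<and>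
      card {i. bil A (e i) (e i) = 1} = p \<and> card {i. bil A (e i) (e i) = -1} = q)"

definition metric_inv :: "(real^'m \<Rightarrow> 'm \<Rightarrow> 'm \<Rightarrow> real) \<Rightarrow> real^'m \<Rightarrow> 'm \<Rightarrow> 'm \<Rightarrow> real" where
  "metric_inv G p k l = matrix_inv (\<chi> i j. G p i j) $ k $ l"

definition christoffel :: "(real^'m::finite \<Rightarrow> 'm \<Rightarrow> 'm \<Rightarrow> real) \<Rightarrow> real^'m \<Rightarrow> 'm \<Rightarrow> 'm \<Rightarrow> 'm \<Rightarrow> real" where
  "christoffel G p k i j = (1/2) * (\<Sum>l\<in>UNIV. metric_inv G p k l *
      (pd (\<lambda>q. G q l j) i p + pd (\<lambda>q. G q l i) j p - pd (\<lambda>q. G q i j) l p))"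

text \<open>Ricci tensor rho(y,z) = trace (x \<mapsto> R(x,y)z), R(x,y) = [nabla_x,nabla_y] - nabla_[x,y]:
 rho_jk = d_l Gamma^l_jk - d_j Gamma^l_lk + Gamma^l_lm Gamma^m_jk - Gamma^l_jm Gamma^m_lk.\<close>
definition ricci :: "(real^'m::finite \<Rightarrow> 'm \<Rightarrow> 'm \<Rightarrow> real) \<Rightarrow> real^'m \<Rightarrow> 'm \<Rightarrow> 'm \<Rightarrow> real" where
  "ricci G p j k = (\<Sum>l\<in>UNIV. pd (\<lambda>q. christoffel G q l j k) l p - pd (\<lambda>q. christoffel G q l l k) j p
      + (\<Sum>m\<in>UNIV. christoffel G p l l m * christoffel G p m j k - christoffel G p l j m * christoffel G p m l k))"

definition cov_deriv_11 :: "(real^'m::finite \<Rightarrow> 'm \<Rightarrow> 'm \<Rightarrow> real) \<Rightarrow> (real^'m \<Rightarrow> 'm \<Rightarrow> 'm \<Rightarrow> real)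
    \<Rightarrow> real^'m \<Rightarrow> 'm \<Rightarrow> 'm \<Rightarrow> 'm \<Rightarrow> real" where
  "cov_deriv_11 G Phi p i k j = pd (\<lambda>q. Phi q k j) i p
      + (\<Sum>l\<in>UNIV. christoffel G p k i l * Phi p l j - christoffel G p l i j * Phi p k l)"

definition cov_deriv_02 :: "(real^'m::finite \<Rightarrow> 'm \<Rightarrow> 'm \<Rightarrow> real) \<Rightarrow> (real^'m \<Rightarrow> 'm \<Rightarrow> 'm \<Rightarrow> real)
    \<Rightarrow> real^'m \<Rightarrow> 'm \<Rightarrow> 'm \<Rightarrow> 'm \<Rightarrow> real" where
  "cov_deriv_02 G T p i j k = pd (\<lambda>q. T q j k) i p
      - (\<Sum>l\<in>UNIV. christoffel G p l i j * T p l k + christoffel G p l i k * T p j l)"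

definition lie_deriv_metric :: "(real^'m::finite \<Rightarrow> 'm \<Rightarrow> 'm \<Rightarrow> real) \<Rightarrow> (real^'m \<Rightarrow> 'm \<Rightarrow> real)
    \<Rightarrow> real^'m \<Rightarrow> 'm \<Rightarrow> 'm \<Rightarrow> real" where
  "lie_deriv_metric G V p i j = (\<Sum>k\<in>UNIV. V p k * pd (\<lambda>q. G q i j) k p
      + G p k j * pd (\<lambda>q. V q k) i p + G p i k * pd (\<lambda>q. V q k) j p)"

definition assoc_metric :: "(real^'m::finite \<Rightarrow> 'm \<Rightarrow> 'm \<Rightarrow> real) \<Rightarrow> (real^'m \<Rightarrow> 'm \<Rightarrow> 'm \<Rightarrow> real)
    \<Rightarrow> (real^'m \<Rightarrow> 'm \<Rightarrow> real) \<Rightarrow> real^'m \<Rightarrow> 'm \<Rightarrow> 'm \<Rightarrow> real" where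
  "assoc_metric G Phi Eta p i j = (\<Sum>k\<in>UNIV. G p i k * Phi p k j) + Eta p i * Eta p j"

definition almost_contact_B_metric :: "nat \<Rightarrow> (real^'m::finite) set \<Rightarrow> (real^'m \<Rightarrow> 'm \<Rightarrow> 'm \<Rightarrow> real)
    \<Rightarrow> (real^'m \<Rightarrow> 'm \<Rightarrow> real) \<Rightarrow> (real^'m \<Rightarrow> 'm \<Rightarrow> real) \<Rightarrow> (real^'m \<Rightarrow> 'm \<Rightarrow> 'm \<Rightarrow> real) \<Rightarrow> bool" where
  "almost_contact_B_metric n U Phi Xi Eta G \<longleftrightarrow>
     CARD('m) = 2 * n + 1 \<and> open U \<and>
     (\<forall>i j. smooth_chart U (\<lambda>p. Phi p i j) \<and> smooth_chart U (\<lambda>p. G p i j)) \<and>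
     (\<forall>i. smooth_chart U (\<lambda>p. Xi p i) \<and> smooth_chart U (\<lambda>p. Eta p i)) \<and>
     (\<forall>p\<in>U.
        (\<forall>i. (\<Sum>j\<in>UNIV. Phi p i j * Xi p j) = 0) \<and>
        (\<forall>i j. (\<Sum>k\<in>UNIV. Phi p i k * Phi p k j) = - kdelta i j + Eta p j * Xi p i) \<and>
        (\<forall>j. (\<Sum>i\<in>UNIV. Eta p i * Phi p i j) = 0) \<and>
        (\<Sum>i\<in>UNIV. Eta p i * Xi p i) = 1 \<and>
        (\<forall>i j. G p i j = G p j i) \<and>
        has_signature (G p) (n + 1) n \<and>
        (\<forall>i j. (\<Sum>a\<in>UNIV. \<Sum>b\<in>UNIV. G p a b * Phi p a i * Phi p b j) = - G p i j + Eta p i * Eta p j))"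

definition sasaki_like :: "(real^'m::finite) set \<Rightarrow> (real^'m \<Rightarrow> 'm \<Rightarrow> 'm \<Rightarrow> real)
    \<Rightarrow> (real^'m \<Rightarrow> 'm \<Rightarrow> real) \<Rightarrow> (real^'m \<Rightarrow> 'm \<Rightarrow> real) \<Rightarrow> (real^'m \<Rightarrow> 'm \<Rightarrow> 'm \<Rightarrow> real) \<Rightarrow> bool" where
  "sasaki_like U Phi Xi Eta G \<longleftrightarrow> (\<forall>p\<in>U. \<forall>i j k.
     cov_deriv_11 G Phi p i k j = - G p i j * Xi p k - Eta p j * kdelta k i + 2 * Eta p i * Eta p j * Xi p k)"

definition ricci_like_soliton :: "(real^'m::finite) set \<Rightarrow> (real^'m \<Rightarrow> 'm \<Rightarrow> 'm \<Rightarrow> real)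
    \<Rightarrow> (real^'m \<Rightarrow> 'm \<Rightarrow> 'm \<Rightarrow> real) \<Rightarrow> (real^'m \<Rightarrow> 'm \<Rightarrow> real) \<Rightarrow> (real^'m \<Rightarrow> 'm \<Rightarrow> real)
    \<Rightarrow> real \<Rightarrow> real \<Rightarrow> real \<Rightarrow> bool" where
  "ricci_like_soliton U G Phi Eta V lam mu nu \<longleftrightarrow> (\<forall>p\<in>U. \<forall>i j.
     (1/2) * lie_deriv_metric G V p i j + ricci G p i j + lam * G p i j
       + mu * assoc_metric G Phi Eta p i j + nu * Eta p i * Eta p j = 0)"

definition locally_ricci_symmetric :: "(real^'m::finite) set \<Rightarrow> (real^'m \<Rightarrow> 'm \<Rightarrow> 'm \<Rightarrow> real) \<Rightarrow> bool" where
  "locally_ricci_symmetric U G \<longleftrightarrow> (\<forall>p\<in>U. \<forall>i j k. cov_deriv_02 G (ricci G) p i j k = 0)"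

definition einstein :: "(real^'m::finite) set \<Rightarrow> (real^'m \<Rightarrow> 'm \<Rightarrow> 'm \<Rightarrow> real) \<Rightarrow> bool" where
  "einstein U G \<longleftrightarrow> (\<exists>c::real. \<forall>p\<in>U. \<forall>i j. ricci G p i j = c * G p i j)"

end

theory Submission
  imports Defs
begin

text \<open>The Sasaki-like condition forces \<open>\<nabla>\<xi> = -\<phi>\<close>; hence \<open>\<L>\<^sub>\<xi> g = -2 g(\<cdot>, \<phi>\<cdot>)\<close> and, by the
  Ricci identity, \<open>\<rho>(\<cdot>, \<xi>) = 2n \<eta>\<close>. Contracting the soliton equation with \<open>\<xi>\<close> gives
  \<open>\<lambda> + \<mu> + \<nu> = -2n\<close>, so that \<open>\<rho> = 2n g + (\<mu> + \<nu>) (g - \<eta>\<otimes>\<eta>) + (1 - \<mu>) g(\<cdot>, \<phi>\<cdot>)\<close>.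
  The Sasaki condition also yields \<open>\<nabla>(g - \<eta>\<otimes>\<eta>)\<close> and \<open>\<nabla>g(\<cdot>, \<phi>\<cdot>)\<close>; contracting \<open>\<nabla>\<rho>\<close>
  with \<open>\<xi>\<close> leaves \<open>(\<mu> + \<nu>) g(\<cdot>, \<phi>\<cdot>) - (1 - \<mu>) (g - \<eta>\<otimes>\<eta>)\<close>, while \<open>\<rho> = c g\<close> forces
  \<open>c = 2n\<close> and \<open>(\<mu> + \<nu>) (g - \<eta>\<otimes>\<eta>) + (1 - \<mu>) g(\<cdot>, \<phi>\<cdot>) = 0\<close>. Since \<open>\<phi>\<close> exchanges
  these two tensors up to sign, they are linearly independent when \<open>n \<ge> 1\<close>, and both
  conditions become \<open>\<mu> = 1\<close>, \<open>\<nu> = -1\<close>.\<close>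

section \<open>Partial derivatives in a chart\<close>

lemma pd_line_has_real_derivative:
  fixes f :: "real^'m \<Rightarrow> real"
  assumes "f differentiable (at (p + s *\<^sub>R axis i 1))"
  shows "((\<lambda>t. f (p + t *\<^sub>R axis i 1)) has_real_derivative pd f i (p + s *\<^sub>R axis i 1)) (at s)"
proof -
  let ?q = "p + s *\<^sub>R axis i (1::real)"
  have "(\<lambda>t. f (?q + t *\<^sub>R axis i 1)) differentiable (at 0)"
    by (rule differentiable_compose[where f=f]) (use assms in \<open>auto intro!: derivative_intros\<close>)
  then have "((\<lambda>t. f (?q + t *\<^sub>R axis i 1)) has_real_derivative pd f i ?q) (at (s + - s))"
    unfolding pd_def using DERIV_deriv_iff_real_differentiable by simp
  then have "((\<lambda>t. f (?q + (t + - s) *\<^sub>R axis i 1)) has_real_derivative pd f i ?q) (at s)"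
    by (subst (asm) DERIV_shift)
  then show ?thesis
    by (simp add: algebra_simps)
qed

lemma pd_has_real_derivative:
  "f differentiable (at p) \<Longrightarrow> ((\<lambda>t. f (p + t *\<^sub>R axis i 1)) has_real_derivative pd f i p) (at 0)"
  using pd_line_has_real_derivative[of f p 0 i] by simp

lemma pd_eqI: "((\<lambda>t. f (p + t *\<^sub>R axis i 1)) has_real_derivative D) (at 0) \<Longrightarrow> pd f i p = D"
  unfolding pd_def by (rule DERIV_imp_deriv)

lemma pd_const [simp]: "pd (\<lambda>q. c) i p = 0"
  by (rule pd_eqI) (auto intro!: derivative_eq_intros)

lemma pd_add:
  "f differentiable (at p) \<Longrightarrow> g differentiable (at p) \<Longrightarrow> pd (\<lambda>q. f q + g q) i p = pd f i p + pd g i p"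
  by (intro pd_eqI) (auto intro!: derivative_eq_intros pd_has_real_derivative)

lemma pd_diff:
  "f differentiable (at p) \<Longrightarrow> g differentiable (at p) \<Longrightarrow> pd (\<lambda>q. f q - g q) i p = pd f i p - pd g i p"
  by (intro pd_eqI) (auto intro!: derivative_eq_intros pd_has_real_derivative)

lemma pd_minus: "f differentiable (at p) \<Longrightarrow> pd (\<lambda>q. - f q) i p = - pd f i p"
  by (intro pd_eqI) (auto intro!: derivative_eq_intros pd_has_real_derivative)

lemma pd_mult:
  "f differentiable (at p) \<Longrightarrow> g differentiable (at p) \<Longrightarrow>
   pd (\<lambda>q. f q * g q) i p = pd f i p * g p + f p * pd g i p"
  by (intro pd_eqI) (auto intro!: derivative_eq_intros pd_has_real_derivative)

lemma pd_cmult: "f differentiable (at p) \<Longrightarrow> pd (\<lambda>q. c * f q) i p = c * pd f i p"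
  by (simp add: pd_mult)

lemma pd_sum:
  "finite S \<Longrightarrow> (\<And>a. a \<in> S \<Longrightarrow> f a differentiable (at p)) \<Longrightarrow>
   pd (\<lambda>q. \<Sum>a\<in>S. f a q) i p = (\<Sum>a\<in>S. pd (f a) i p)"
  by (intro pd_eqI) (auto intro!: DERIV_sum pd_has_real_derivative)

lemma pd_cong_open:
  assumes "open U" "p \<in> U" "\<And>q. q \<in> U \<Longrightarrow> f q = g q"
  shows "pd f i p = pd g i p"
  unfolding pd_def
proof (rule deriv_cong_ev[OF _ refl])
  have "open ((\<lambda>t::real. p + t *\<^sub>R axis i 1) -` U)"
    by (rule continuous_open_vimage[OF assms(1)]) (auto intro!: continuous_intros)
  moreover have "0 \<in> (\<lambda>t::real. p + t *\<^sub>R axis i 1) -` U"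
    using assms(2) by simp
  ultimately have "\<forall>\<^sub>F t in nhds 0. t \<in> (\<lambda>t::real. p + t *\<^sub>R axis i 1) -` U"
    by (rule eventually_nhds_in_open)
  then show "\<forall>\<^sub>F t in nhds 0. f (p + t *\<^sub>R axis i 1) = g (p + t *\<^sub>R axis i 1)"
    by eventually_elim (use assms(3) in auto)
qed

lemma pd_eq_0_if_constant_on:
  "open U \<Longrightarrow> p \<in> U \<Longrightarrow> (\<And>q. q \<in> U \<Longrightarrow> f q = c) \<Longrightarrow> pd f i p = 0"
  using pd_cong_open[of U p f "\<lambda>q. c"] by simp

lemma norm_two_axes_le:
  assumes "0 \<le> s" "s \<le> h" "0 \<le> t" "t \<le> h"
  shows "norm (s *\<^sub>R axis i (1::real) + t *\<^sub>R axis j 1 :: real^'m) \<le> 2 * h"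
proof -
  have "norm (s *\<^sub>R axis i (1::real) + t *\<^sub>R axis j 1 :: real^'m)
      \<le> norm (s *\<^sub>R axis i (1::real) :: real^'m) + norm (t *\<^sub>R axis j (1::real) :: real^'m)"
    by (rule norm_triangle_ineq)
  also have "\<dots> = s + t"
    using assms by simp
  finally show ?thesis
    using assms by simp
qed

lemma second_difference_mvt:
  fixes f :: "real^'m \<Rightarrow> real"
  assumes h: "0 < h" and sub: "cball p (2*h) \<subseteq> U"
    and df: "\<forall>q\<in>U. f differentiable (at q)" and dfi: "\<forall>q\<in>U. pd f i differentiable (at q)"
  shows "\<exists>x. dist x p \<le> 2*h \<and>
     f (p + h *\<^sub>R axis j 1 + h *\<^sub>R axis i 1) - f (p + h *\<^sub>R axis i 1) - f (p + h *\<^sub>R axis j 1) + f p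
       = h * h * pd (pd f i) j x"
proof -
  let ?ei = "axis i (1::real) :: real^'m" and ?ej = "axis j (1::real) :: real^'m"
  have inU: "p + s *\<^sub>R ?ei + t *\<^sub>R ?ej \<in> U" if "0 \<le> s" "s \<le> h" "0 \<le> t" "t \<le> h" for s t
  proof -
    have "dist (p + s *\<^sub>R ?ei + t *\<^sub>R ?ej) p \<le> 2*h"
      using norm_two_axes_le[OF that, of i j] by (simp add: dist_norm add.assoc)
    then show ?thesis
      using sub by (auto simp: dist_commute)
  qed
  define \<phi> where "\<phi> s = f ((p + h *\<^sub>R ?ej) + s *\<^sub>R ?ei) - f (p + s *\<^sub>R ?ei)" for s
  have d\<phi>: "DERIV \<phi> s :> pd f i ((p + h *\<^sub>R ?ej) + s *\<^sub>R ?ei) - pd f i (p + s *\<^sub>R ?ei)"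
    if "0 \<le> s" "s \<le> h" for s
  proof -
    have "(p + h *\<^sub>R ?ej) + s *\<^sub>R ?ei \<in> U" "p + s *\<^sub>R ?ei \<in> U"
      using inU[of s h] inU[of s 0] that h by (simp_all add: algebra_simps)
    then show ?thesis
      unfolding \<phi>_def using df by (intro DERIV_diff pd_line_has_real_derivative) auto
  qed
  obtain s where s: "0 < s" "s < h"
    "\<phi> h - \<phi> 0 = (h - 0) * (pd f i ((p + h *\<^sub>R ?ej) + s *\<^sub>R ?ei) - pd f i (p + s *\<^sub>R ?ei))"
    using MVT2[OF h, of \<phi>, OF d\<phi>] by blast
  define \<psi> where "\<psi> t = pd f i ((p + s *\<^sub>R ?ei) + t *\<^sub>R ?ej)" for t
  have d\<psi>: "DERIV \<psi> t :> pd (pd f i) j ((p + s *\<^sub>R ?ei) + t *\<^sub>R ?ej)" if "0 \<le> t" "t \<le> h" for t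
    unfolding \<psi>_def using inU[of s t] that s dfi by (intro pd_line_has_real_derivative) auto
  obtain t where t: "0 < t" "t < h" "\<psi> h - \<psi> 0 = (h - 0) * pd (pd f i) j ((p + s *\<^sub>R ?ei) + t *\<^sub>R ?ej)"
    using MVT2[OF h, of \<psi>, OF d\<psi>] by blast
  have "dist ((p + s *\<^sub>R ?ei) + t *\<^sub>R ?ej) p \<le> 2*h"
    using norm_two_axes_le[of s h t i j] s t by (simp add: dist_norm add.assoc)
  moreover have "f (p + h *\<^sub>R ?ej + h *\<^sub>R ?ei) - f (p + h *\<^sub>R ?ei) - f (p + h *\<^sub>R ?ej) + f p = \<phi> h - \<phi> 0"
    by (simp add: \<phi>_def)
  moreover have "\<phi> h - \<phi> 0 = h * (\<psi> h - \<psi> 0)"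
    using s(3) by (simp add: \<psi>_def algebra_simps)
  ultimately show ?thesis
    using t(3) by auto
qed

lemma pd_pd_commute:
  fixes f :: "real^'m \<Rightarrow> real"
  assumes U: "open U" "p \<in> U"
    and df: "\<forall>q\<in>U. f differentiable (at q)" and dfi: "\<forall>k. \<forall>q\<in>U. pd f k differentiable (at q)"
    and ci: "continuous_on U (pd (pd f i) j)" and cj: "continuous_on U (pd (pd f j) i)"
  shows "pd (pd f i) j p = pd (pd f j) i p"
proof (rule ccontr)
  let ?A = "pd (pd f i) j" and ?B = "pd (pd f j) i"
  assume ne: "?A p \<noteq> ?B p"
  define d where "d = \<bar>?A p - ?B p\<bar> / 2"
  have d: "d > 0"
    using ne by (simp add: d_def)
  obtain r where r: "r > 0" "cball p r \<subseteq> U"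
    using U open_contains_cball by blast
  have "isCont ?A p" "isCont ?B p"
    using ci cj U by (simp_all add: continuous_on_eq_continuous_at)
  then obtain dA dB where dA: "dA > 0" "\<forall>x. dist x p < dA \<longrightarrow> dist (?A x) (?A p) < d"
    and dB: "dB > 0" "\<forall>x. dist x p < dB \<longrightarrow> dist (?B x) (?B p) < d"
    using d unfolding continuous_at_eps_delta by blast
  define h where "h = min r (min dA dB) / 4"
  have h: "h > 0" "2*h < dA" "2*h < dB"
    using r dA dB by (auto simp: h_def)
  have "2*h \<le> r"
    using r dA dB by (simp add: h_def)
  then have sub: "cball p (2*h) \<subseteq> U"
    using r(2) subset_cball by blast
  obtain x1 where x1: "dist x1 p \<le> 2*h"
    "f (p + h *\<^sub>R axis j 1 + h *\<^sub>R axis i 1) - f (p + h *\<^sub>R axis i 1) - f (p + h *\<^sub>R axis j 1) + f p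
       = h * h * ?A x1"
    using second_difference_mvt[OF h(1) sub df, where i=i and j=j] dfi by blast
  obtain x2 where x2: "dist x2 p \<le> 2*h"
    "f (p + h *\<^sub>R axis i 1 + h *\<^sub>R axis j 1) - f (p + h *\<^sub>R axis j 1) - f (p + h *\<^sub>R axis i 1) + f p
       = h * h * ?B x2"
    using second_difference_mvt[OF h(1) sub df, where i=j and j=i] dfi by blast
  have swap: "p + h *\<^sub>R axis i 1 + h *\<^sub>R axis j 1 = p + h *\<^sub>R axis j 1 + h *\<^sub>R axis i 1"
    by (simp add: add_ac)
  have "h * h * ?A x1 = h * h * ?B x2"
    using x1(2) x2(2) unfolding swap by linarith
  then have "?A x1 = ?B x2"
    using h(1) by simp
  moreover have "\<bar>?A x1 - ?A p\<bar> < d" "\<bar>?B x2 - ?B p\<bar> < d"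
    using dA dB x1(1) x2(1) h by (auto simp: dist_real_def)
  ultimately have "\<bar>?A p - ?B p\<bar> < 2 * d"
    by linarith
  then show False
    by (simp add: d_def)
qed

lemma smooth_chart_pd: "smooth_chart U f \<Longrightarrow> smooth_chart U (pd f i)"
  unfolding smooth_chart_def by (metis Ck.simps(2))

lemma smooth_chart_continuous_on: "smooth_chart U f \<Longrightarrow> continuous_on U f"
  unfolding smooth_chart_def by (metis Ck.simps(1))

lemma smooth_chart_differentiable:
  assumes "open U" "smooth_chart U f" "q \<in> U"
  shows "f differentiable (at q)"
proof -
  have "Ck 1 U f"
    using assms(2) unfolding smooth_chart_def by blast
  then show ?thesis
    using assms(1,3) differentiable_on_eq_differentiable_at by auto
qed

lemma smooth_chart_pd_pd_commute:
  assumes U: "open U" "p \<in> U" and f: "smooth_chart U f"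
  shows "pd (pd f i) j p = pd (pd f j) i p"
proof (rule pd_pd_commute[OF U])
  show "\<forall>q\<in>U. f differentiable (at q)" "\<forall>k. \<forall>q\<in>U. pd f k differentiable (at q)"
    using smooth_chart_differentiable[OF U(1)] smooth_chart_pd[OF f] f by blast+
  show "continuous_on U (pd (pd f i) j)" "continuous_on U (pd (pd f j) i)"
    using smooth_chart_continuous_on smooth_chart_pd f by blast+
qed

lemma differentiable_prod:
  fixes f :: "'a \<Rightarrow> 'b::real_normed_vector \<Rightarrow> real"
  shows "finite S \<Longrightarrow> (\<And>a. a \<in> S \<Longrightarrow> f a differentiable (at p)) \<Longrightarrow>
    (\<lambda>q. \<Prod>a\<in>S. f a q) differentiable (at p)"
  by (induction S rule: finite_induct) auto

lemma differentiable_det: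
  fixes A :: "'a::real_normed_vector \<Rightarrow> real^'n::finite^'n"
  assumes "\<And>i j. (\<lambda>q. A q $ i $ j) differentiable (at p)"
  shows "(\<lambda>q. det (A q)) differentiable (at p)"
  unfolding det_def
  by (intro differentiable_sum ballI differentiable_mult differentiable_const differentiable_prod assms)
    (simp_all add: finite_permutations)

section \<open>Nondegenerate metrics and the Levi-Civita connection\<close>

lemma has_signature_det_nonzero:
  assumes "has_signature A a b"
  shows "det (\<chi> i j. A i j) \<noteq> 0"
proof -
  obtain e :: "'a \<Rightarrow> real^'a" where
    orth: "\<And>i j. i \<noteq> j \<Longrightarrow> bil A (e i) (e j) = 0" and
    unit: "\<And>i. bil A (e i) (e i) = 1 \<or> bil A (e i) (e i) = -1"
    using assms unfolding has_signature_def by (elim exE conjE) (blast intro: that)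
  define E :: "real^'a^'a" where "E = (\<chi> x y. e y $ x)"
  define M :: "real^'a^'a" where "M = (\<chi> i j. A i j)"
  have entry: "(transpose E ** M ** E) $ x $ y = bil A (e x) (e y)" for x y
  proof -
    have "(transpose E ** M ** E) $ x $ y = (\<Sum>b\<in>UNIV. \<Sum>a\<in>UNIV. e x $ a * A a b * e y $ b)"
      by (simp add: E_def M_def matrix_matrix_mult_def transpose_def sum_distrib_right)
    also have "\<dots> = bil A (e x) (e y)"
      unfolding bil_def by (rule sum.swap)
    finally show ?thesis .
  qed
  have "det (transpose E) * det M * det E = det (transpose E ** M ** E)"
    by (simp only: det_mul)
  also have "\<dots> = (\<Prod>i\<in>UNIV. bil A (e i) (e i))"
    by (subst det_diagonal) (use orth in \<open>simp_all add: entry\<close>)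
  also have "\<dots> \<noteq> 0"
  proof -
    have "bil A (e i) (e i) \<noteq> 0" for i
      using unit[of i] by auto
    then show ?thesis
      by simp
  qed
  finally show ?thesis
    by (simp add: M_def)
qed

lemma matrix_inv_right:
  fixes A :: "real^'n^'n"
  assumes "det A \<noteq> 0"
  shows "A ** matrix_inv A = mat 1"
proof -
  have "invertible A"
    using assms by (simp add: invertible_det_nz)
  then obtain A' where "A ** A' = mat 1 \<and> A' ** A = mat 1"
    unfolding invertible_def by blast
  then have "A ** matrix_inv A = mat 1 \<and> matrix_inv A ** A = mat 1"
    unfolding matrix_inv_def by (rule someI)
  then show ?thesis
    by blast
qed

lemma matrix_inv_cramer:
  fixes A :: "real^'n^'n"
  assumes "det A \<noteq> 0"
  shows "matrix_inv A $ k $ l = det (\<chi> i j. if j = k then axis l 1 $ i else A $ i $ j) / det A"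
proof -
  have "A *v (matrix_inv A *v axis l 1) = axis l 1"
    by (simp add: matrix_vector_mul_assoc matrix_inv_right[OF assms])
  then have "matrix_inv A *v axis l 1 = (\<chi> k. det (\<chi> i j. if j = k then axis l 1 $ i else A $ i $ j) / det A)"
    by (rule iffD1[OF cramer[OF assms]])
  then show ?thesis
    by (simp add: vec_eq_iff matrix_vector_mult_basis column_def)
qed

lemma sum_kdelta_mult: "(\<Sum>l\<in>UNIV. kdelta m l * f l) = (f m :: real)" for m :: "'a::finite"
proof -
  have "kdelta m l * f l = (if m = l then f m else 0)" for l
    by (simp add: kdelta_def)
  then show ?thesis
    by simp
qed

lemma sum_kdelta_mult_sym: "(\<Sum>l\<in>UNIV. kdelta l m * f l) = (f m :: real)" for m :: "'a::finite"
proof -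
  have "kdelta l m * f l = (if m = l then f m else 0)" for l
    by (auto simp add: kdelta_def)
  then show ?thesis
    by simp
qed

lemma sum_swap3: "(\<Sum>j\<in>A. \<Sum>a\<in>B. \<Sum>b\<in>C. f j a b) = (\<Sum>a\<in>B. \<Sum>b\<in>C. \<Sum>j\<in>A. f j a b)"
  by (subst sum.swap) (rule sum.cong[OF refl], rule sum.swap)

lemma cov_deriv_02_cong_open:
  assumes "open U" "p \<in> U" "\<And>q j k. q \<in> U \<Longrightarrow> S q j k = T q j k"
  shows "cov_deriv_02 G S p i j k = cov_deriv_02 G T p i j k"
proof -
  have "pd (\<lambda>q. S q j k) i p = pd (\<lambda>q. T q j k) i p"
    by (rule pd_cong_open[OF assms(1,2)]) (simp add: assms(3))
  then show ?thesis
    unfolding cov_deriv_02_def by (simp add: assms)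
qed

lemma cov_deriv_02_add:
  assumes "\<And>j k. (\<lambda>q. S q j k) differentiable (at p)" "\<And>j k. (\<lambda>q. T q j k) differentiable (at p)"
  shows "cov_deriv_02 G (\<lambda>q j k. S q j k + T q j k) p i j k = cov_deriv_02 G S p i j k + cov_deriv_02 G T p i j k"
  unfolding cov_deriv_02_def using assms by (simp add: pd_add sum.distrib algebra_simps)

lemma cov_deriv_02_cmult:
  assumes "\<And>j k. (\<lambda>q. T q j k) differentiable (at p)"
  shows "cov_deriv_02 G (\<lambda>q j k. c * T q j k) p i j k = c * cov_deriv_02 G T p i j k"
  unfolding cov_deriv_02_def using assms by (simp add: pd_cmult sum_distrib_left algebra_simps)

definition cov_deriv_10 :: "(real^'m::finite \<Rightarrow> 'm \<Rightarrow> 'm \<Rightarrow> real) \<Rightarrow> (real^'m \<Rightarrow> 'm \<Rightarrow> real)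
    \<Rightarrow> real^'m \<Rightarrow> 'm \<Rightarrow> 'm \<Rightarrow> real" where
  "cov_deriv_10 G X p i k = pd (\<lambda>q. X q k) i p + (\<Sum>l\<in>UNIV. christoffel G p k i l * X p l)"

locale metric_chart =
  fixes U :: "(real^'m::finite) set" and G :: "real^'m \<Rightarrow> 'm \<Rightarrow> 'm \<Rightarrow> real"
  assumes open_U: "open U"
    and smooth_G: "\<And>i j. smooth_chart U (\<lambda>p. G p i j)"
    and G_sym: "\<And>p i j. p \<in> U \<Longrightarrow> G p i j = G p j i"
    and det_G_nonzero: "\<And>p. p \<in> U \<Longrightarrow> det (\<chi> i j. G p i j) \<noteq> 0"
begin

abbreviation \<Gamma> :: "real^'m \<Rightarrow> 'm \<Rightarrow> 'm \<Rightarrow> 'm \<Rightarrow> real" where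
  "\<Gamma> \<equiv> christoffel G"

lemma G_differentiable: "p \<in> U \<Longrightarrow> (\<lambda>q. G q i j) differentiable (at p)"
  using smooth_chart_differentiable[OF open_U smooth_G] .

lemma pd_G_differentiable: "p \<in> U \<Longrightarrow> pd (\<lambda>q. G q i j) k differentiable (at p)"
  using smooth_chart_differentiable[OF open_U smooth_chart_pd[OF smooth_G]] .

lemma G_metric_inv:
  assumes "p \<in> U"
  shows "(\<Sum>l\<in>UNIV. G p i l * metric_inv G p l k) = kdelta i k"
proof -
  have "((\<chi> i j. G p i j) ** matrix_inv (\<chi> i j. G p i j)) $ i $ k = mat 1 $ i $ k"
    using matrix_inv_right[OF det_G_nonzero[OF assms]] by simp
  then show ?thesis
    unfolding matrix_matrix_mult_def mat_def metric_inv_def kdelta_def by simp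
qed

lemma metric_inv_differentiable:
  assumes "p \<in> U"
  shows "(\<lambda>q. metric_inv G q k l) differentiable (at p)"
proof -
  let ?N = "\<lambda>q. det (\<chi> i j. if j = k then axis l 1 $ i else G q i j)"
  have "(\<lambda>q. (\<chi> i j. if j = k then axis l 1 $ i else G q i j) $ i $ j) differentiable (at p)" for i j
    using assms by (cases "j = k") (simp_all add: G_differentiable)
  then have "?N differentiable (at p)" "(\<lambda>q. det (\<chi> i j. G q i j)) differentiable (at p)"
    using assms by (auto intro!: differentiable_det simp: G_differentiable)
  then have "(\<lambda>q. ?N q / det (\<chi> i j. G q i j)) differentiable (at p)"
    using det_G_nonzero[OF assms] by simp
  then obtain D where "((\<lambda>q. ?N q / det (\<chi> i j. G q i j)) has_derivative D) (at p)"
    unfolding differentiable_def by blast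
  then have "((\<lambda>q. metric_inv G q k l) has_derivative D) (at p)"
  proof (rule has_derivative_transform_within_open[OF _ open_U assms])
    fix q assume "q \<in> U"
    have "(\<chi> i j. if j = k then axis l 1 $ i else (\<chi> i j. G q i j) $ i $ j)
        = (\<chi> i j. if j = k then axis l 1 $ i else G q i j)"
      by (simp add: vec_eq_iff)
    then show "?N q / det (\<chi> i j. G q i j) = metric_inv G q k l"
      unfolding metric_inv_def matrix_inv_cramer[OF det_G_nonzero[OF \<open>q \<in> U\<close>]] by simp
  qed
  then show ?thesis
    unfolding differentiable_def by blast
qed

lemma christoffel_differentiable: "p \<in> U \<Longrightarrow> (\<lambda>q. \<Gamma> q k i j) differentiable (at p)"
  unfolding christoffel_def
  by (intro differentiable_mult differentiable_const differentiable_sum ballI differentiable_add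
      differentiable_diff metric_inv_differentiable pd_G_differentiable) simp_all

lemma pd_G_sym: "p \<in> U \<Longrightarrow> pd (\<lambda>q. G q i j) k p = pd (\<lambda>q. G q j i) k p"
  by (rule pd_cong_open[OF open_U]) (auto intro: G_sym)

lemma christoffel_sym: "p \<in> U \<Longrightarrow> \<Gamma> p k i j = \<Gamma> p k j i"
  unfolding christoffel_def using pd_G_sym[of p i j] by (simp add: algebra_simps)

lemma G_christoffel:
  assumes "p \<in> U"
  shows "(\<Sum>k\<in>UNIV. G p m k * \<Gamma> p k i j)
       = (pd (\<lambda>q. G q m j) i p + pd (\<lambda>q. G q m i) j p - pd (\<lambda>q. G q i j) m p) / 2"
proof -
  define X where "X l = pd (\<lambda>q. G q l j) i p + pd (\<lambda>q. G q l i) j p - pd (\<lambda>q. G q i j) l p" for l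
  have "(\<Sum>k\<in>UNIV. G p m k * \<Gamma> p k i j) = (\<Sum>k\<in>UNIV. \<Sum>l\<in>UNIV. G p m k * metric_inv G p k l * X l) / 2"
    unfolding christoffel_def X_def by (simp add: sum_distrib_left sum_divide_distrib mult_ac)
  also have "\<dots> = (\<Sum>l\<in>UNIV. (\<Sum>k\<in>UNIV. G p m k * metric_inv G p k l) * X l) / 2"
    by (subst sum.swap) (simp add: sum_distrib_right)
  also have "\<dots> = X m / 2"
    by (simp add: G_metric_inv[OF assms] sum_kdelta_mult)
  finally show ?thesis
    by (simp add: X_def)
qed

lemma pd_G_christoffel:
  assumes "p \<in> U"
  shows "pd (\<lambda>q. G q i j) k p = (\<Sum>l\<in>UNIV. \<Gamma> p l k i * G p l j + \<Gamma> p l k j * G p i l)"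
proof -
  have "(\<Sum>l\<in>UNIV. \<Gamma> p l k i * G p l j) = (\<Sum>l\<in>UNIV. G p j l * \<Gamma> p l k i)"
    using G_sym[OF assms] by (simp add: mult.commute)
  moreover have "(\<Sum>l\<in>UNIV. \<Gamma> p l k j * G p i l) = (\<Sum>l\<in>UNIV. G p i l * \<Gamma> p l k j)"
    by (simp add: mult.commute)
  ultimately show ?thesis
    unfolding sum.distrib G_christoffel[OF assms]
    using pd_G_sym[OF assms, of j i k] pd_G_sym[OF assms, of j k i] pd_G_sym[OF assms, of i k j]
    by (simp add: field_simps)
qed

lemma cov_deriv_02_G: "p \<in> U \<Longrightarrow> cov_deriv_02 G G p i j k = 0"
  unfolding cov_deriv_02_def by (simp add: pd_G_christoffel)

lemma pd_lower_index:
  assumes p: "p \<in> U" and X: "\<And>l. (\<lambda>q. X q l) differentiable (at p)"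
  shows "pd (\<lambda>q. \<Sum>l\<in>UNIV. G q k l * X q l) i p
       = (\<Sum>m\<in>UNIV. \<Gamma> p m i k * (\<Sum>l\<in>UNIV. G p m l * X p l)) + (\<Sum>l\<in>UNIV. G p k l * cov_deriv_10 G X p i l)"
proof -
  have dX: "pd (\<lambda>q. X q l) i p = cov_deriv_10 G X p i l - (\<Sum>m\<in>UNIV. \<Gamma> p l i m * X p m)" for l
    unfolding cov_deriv_10_def by simp
  have "pd (\<lambda>q. \<Sum>l\<in>UNIV. G q k l * X q l) i p
      = (\<Sum>l\<in>UNIV. pd (\<lambda>q. G q k l) i p * X p l + G p k l * pd (\<lambda>q. X q l) i p)"
    using X by (simp add: pd_sum pd_mult G_differentiable p)
  also have "\<dots> = (\<Sum>l\<in>UNIV. \<Sum>m\<in>UNIV. \<Gamma> p m i k * G p m l * X p l)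
      + (\<Sum>l\<in>UNIV. \<Sum>m\<in>UNIV. \<Gamma> p m i l * G p k m * X p l)
      + (\<Sum>l\<in>UNIV. G p k l * cov_deriv_10 G X p i l)
      - (\<Sum>l\<in>UNIV. \<Sum>m\<in>UNIV. G p k l * \<Gamma> p l i m * X p m)"
    unfolding pd_G_christoffel[OF p] dX
    by (simp add: algebra_simps sum.distrib sum_subtractf sum_distrib_left sum_distrib_right)
  also have "(\<Sum>l\<in>UNIV. \<Sum>m\<in>UNIV. \<Gamma> p m i l * G p k m * X p l)
      = (\<Sum>l\<in>UNIV. \<Sum>m\<in>UNIV. G p k l * \<Gamma> p l i m * X p m)"
    by (subst sum.swap) (simp add: mult_ac)
  also have "(\<Sum>l\<in>UNIV. \<Sum>m\<in>UNIV. \<Gamma> p m i k * G p m l * X p l)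
      = (\<Sum>m\<in>UNIV. \<Gamma> p m i k * (\<Sum>l\<in>UNIV. G p m l * X p l))"
    by (subst sum.swap) (simp add: sum_distrib_left mult_ac)
  finally show ?thesis
    by simp
qed

lemma sum_G_pd_cov_deriv_10:
  "(\<Sum>k\<in>UNIV. G p k j * pd (\<lambda>q. X q k) i p)
     = (\<Sum>k\<in>UNIV. G p k j * cov_deriv_10 G X p i k) - (\<Sum>k\<in>UNIV. \<Sum>l\<in>UNIV. G p k j * \<Gamma> p k i l * X p l)"
  unfolding cov_deriv_10_def by (simp add: algebra_simps sum.distrib sum_distrib_left)

lemma lie_deriv_metric_cov_deriv:
  assumes p: "p \<in> U"
  shows "lie_deriv_metric G X p i j
       = (\<Sum>k\<in>UNIV. G p k j * cov_deriv_10 G X p i k + G p i k * cov_deriv_10 G X p j k)"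
proof -
  have "(\<Sum>k\<in>UNIV. X p k * pd (\<lambda>q. G q i j) k p)
      = (\<Sum>k\<in>UNIV. \<Sum>l\<in>UNIV. X p k * \<Gamma> p l k i * G p l j) + (\<Sum>k\<in>UNIV. \<Sum>l\<in>UNIV. X p k * \<Gamma> p l k j * G p i l)"
    unfolding pd_G_christoffel[OF p] by (simp add: algebra_simps sum.distrib sum_distrib_left)
  also have "(\<Sum>k\<in>UNIV. \<Sum>l\<in>UNIV. X p k * \<Gamma> p l k i * G p l j)
      = (\<Sum>k\<in>UNIV. \<Sum>l\<in>UNIV. G p k j * \<Gamma> p k i l * X p l)"
    by (subst sum.swap) (simp add: christoffel_sym[OF p] mult_ac)
  also have "(\<Sum>k\<in>UNIV. \<Sum>l\<in>UNIV. X p k * \<Gamma> p l k j * G p i l)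
      = (\<Sum>k\<in>UNIV. \<Sum>l\<in>UNIV. G p k i * \<Gamma> p k j l * X p l)"
    by (subst sum.swap) (simp add: christoffel_sym[OF p] G_sym[OF p] mult_ac)
  finally have "lie_deriv_metric G X p i j
      = (\<Sum>k\<in>UNIV. G p k j * cov_deriv_10 G X p i k) + (\<Sum>k\<in>UNIV. G p k i * cov_deriv_10 G X p j k)"
    unfolding lie_deriv_metric_def sum.distrib sum_G_pd_cov_deriv_10
    using sum_G_pd_cov_deriv_10[of p i X j] G_sym[OF p] by (simp add: mult.commute)
  then show ?thesis
    using G_sym[OF p] by (simp add: sum.distrib)
qed

lemma trace_cov_deriv_11: "(\<Sum>l\<in>UNIV. cov_deriv_11 G A p j l l) = (\<Sum>l\<in>UNIV. pd (\<lambda>q. A q l l) j p)"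
proof -
  have "(\<Sum>l\<in>UNIV. \<Sum>m\<in>UNIV. \<Gamma> p m j l * A p l m) = (\<Sum>l\<in>UNIV. \<Sum>m\<in>UNIV. \<Gamma> p l j m * A p m l)"
    by (rule sum.swap)
  then show ?thesis
    unfolding cov_deriv_11_def by (simp add: sum.distrib sum_subtractf)
qed

lemma sum_ricci_mult:
  "(\<Sum>k\<in>UNIV. ricci G p j k * X k)
     = (\<Sum>l\<in>UNIV. \<Sum>m\<in>UNIV. pd (\<lambda>q. \<Gamma> q l j m) l p * X m)
       - (\<Sum>l\<in>UNIV. \<Sum>m\<in>UNIV. pd (\<lambda>q. \<Gamma> q l l m) j p * X m)
       + (\<Sum>l\<in>UNIV. \<Sum>m\<in>UNIV. \<Sum>s\<in>UNIV. \<Gamma> p l l m * \<Gamma> p m j s * X s)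
       - (\<Sum>l\<in>UNIV. \<Sum>m\<in>UNIV. \<Sum>s\<in>UNIV. \<Gamma> p l j m * \<Gamma> p m l s * X s)"
proof -
  have "(\<Sum>k\<in>UNIV. ricci G p j k * X k)
      = (\<Sum>k\<in>UNIV. \<Sum>l\<in>UNIV. pd (\<lambda>q. \<Gamma> q l j k) l p * X k)
        - (\<Sum>k\<in>UNIV. \<Sum>l\<in>UNIV. pd (\<lambda>q. \<Gamma> q l l k) j p * X k)
        + (\<Sum>k\<in>UNIV. \<Sum>l\<in>UNIV. \<Sum>m\<in>UNIV. \<Gamma> p l l m * \<Gamma> p m j k * X k)
        - (\<Sum>k\<in>UNIV. \<Sum>l\<in>UNIV. \<Sum>m\<in>UNIV. \<Gamma> p l j m * \<Gamma> p m l k * X k)"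
    unfolding ricci_def by (simp add: algebra_simps sum.distrib sum_subtractf sum_distrib_right sum_distrib_left)
  also have "(\<Sum>k\<in>UNIV. \<Sum>l\<in>UNIV. pd (\<lambda>q. \<Gamma> q l j k) l p * X k)
      = (\<Sum>l\<in>UNIV. \<Sum>m\<in>UNIV. pd (\<lambda>q. \<Gamma> q l j m) l p * X m)"
    by (rule sum.swap)
  also have "(\<Sum>k\<in>UNIV. \<Sum>l\<in>UNIV. pd (\<lambda>q. \<Gamma> q l l k) j p * X k)
      = (\<Sum>l\<in>UNIV. \<Sum>m\<in>UNIV. pd (\<lambda>q. \<Gamma> q l l m) j p * X m)"
    by (rule sum.swap)
  also have "(\<Sum>k\<in>UNIV. \<Sum>l\<in>UNIV. \<Sum>m\<in>UNIV. \<Gamma> p l l m * \<Gamma> p m j k * X k)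
      = (\<Sum>l\<in>UNIV. \<Sum>m\<in>UNIV. \<Sum>s\<in>UNIV. \<Gamma> p l l m * \<Gamma> p m j s * X s)"
    by (rule sum_swap3)
  also have "(\<Sum>k\<in>UNIV. \<Sum>l\<in>UNIV. \<Sum>m\<in>UNIV. \<Gamma> p l j m * \<Gamma> p m l k * X k)
      = (\<Sum>l\<in>UNIV. \<Sum>m\<in>UNIV. \<Sum>s\<in>UNIV. \<Gamma> p l j m * \<Gamma> p m l s * X s)"
    by (rule sum_swap3)
  finally show ?thesis .
qed

lemma cov_deriv_02_lower_index:
  assumes p: "p \<in> U" and A: "\<And>l k. (\<lambda>q. A q l k) differentiable (at p)"
  shows "cov_deriv_02 G (\<lambda>q j k. \<Sum>l\<in>UNIV. G q j l * A q l k) p i j k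
       = (\<Sum>l\<in>UNIV. G p j l * cov_deriv_11 G A p i l k)"
proof -
  define T1 where "T1 = (\<Sum>l\<in>UNIV. \<Sum>m\<in>UNIV. \<Gamma> p m i j * G p m l * A p l k)"
  define T2 where "T2 = (\<Sum>l\<in>UNIV. \<Sum>m\<in>UNIV. \<Gamma> p m i l * G p j m * A p l k)"
  define T3 where "T3 = (\<Sum>l\<in>UNIV. \<Sum>m\<in>UNIV. G p j l * \<Gamma> p l i m * A p m k)"
  define T4 where "T4 = (\<Sum>l\<in>UNIV. \<Sum>m\<in>UNIV. G p j l * \<Gamma> p m i k * A p l m)"
  have dA: "pd (\<lambda>q. A q l k) i p
      = cov_deriv_11 G A p i l k - (\<Sum>m\<in>UNIV. \<Gamma> p l i m * A p m k - \<Gamma> p m i k * A p l m)" for l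
    unfolding cov_deriv_11_def by simp
  have "pd (\<lambda>q. \<Sum>l\<in>UNIV. G q j l * A q l k) i p
      = (\<Sum>l\<in>UNIV. pd (\<lambda>q. G q j l) i p * A p l k + G p j l * pd (\<lambda>q. A q l k) i p)"
    using A by (simp add: pd_sum pd_mult G_differentiable p)
  also have "\<dots> = T1 + T2 + (\<Sum>l\<in>UNIV. G p j l * cov_deriv_11 G A p i l k) - T3 + T4"
    unfolding T1_def T2_def T3_def T4_def pd_G_christoffel[OF p] dA
    by (simp add: algebra_simps sum.distrib sum_subtractf sum_distrib_left sum_distrib_right)
  finally have "pd (\<lambda>q. \<Sum>l\<in>UNIV. G q j l * A q l k) i p
      = T1 + T2 + (\<Sum>l\<in>UNIV. G p j l * cov_deriv_11 G A p i l k) - T3 + T4" .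
  moreover have "(\<Sum>l\<in>UNIV. \<Gamma> p l i j * (\<Sum>m\<in>UNIV. G p l m * A p m k)) = T1"
    unfolding T1_def by (subst sum.swap) (simp add: sum_distrib_left mult_ac)
  moreover have "(\<Sum>l\<in>UNIV. \<Gamma> p l i k * (\<Sum>m\<in>UNIV. G p j m * A p m l)) = T4"
    unfolding T4_def by (subst sum.swap) (simp add: sum_distrib_left mult_ac)
  moreover have "T2 = T3"
    unfolding T2_def T3_def by (subst sum.swap) (simp add: mult_ac)
  ultimately show ?thesis
    unfolding cov_deriv_02_def by (simp add: sum.distrib)
qed

end

section \<open>Sasaki-like charts\<close>

definition phi_form :: "(real^'m::finite \<Rightarrow> 'm \<Rightarrow> 'm \<Rightarrow> real) \<Rightarrow> (real^'m \<Rightarrow> 'm \<Rightarrow> 'm \<Rightarrow> real)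
    \<Rightarrow> real^'m \<Rightarrow> 'm \<Rightarrow> 'm \<Rightarrow> real" where
  "phi_form G Phi p i j = (\<Sum>k\<in>UNIV. G p i k * Phi p k j)"

definition horizontal_metric :: "(real^'m::finite \<Rightarrow> 'm \<Rightarrow> 'm \<Rightarrow> real) \<Rightarrow> (real^'m \<Rightarrow> 'm \<Rightarrow> real)
    \<Rightarrow> real^'m \<Rightarrow> 'm \<Rightarrow> 'm \<Rightarrow> real" where
  "horizontal_metric G Eta p i j = G p i j - Eta p i * Eta p j"

locale sasaki_like_chart =
  fixes U :: "(real^'m::finite) set"
    and G Phi :: "real^'m \<Rightarrow> 'm \<Rightarrow> 'm \<Rightarrow> real"
    and Xi Eta :: "real^'m \<Rightarrow> 'm \<Rightarrow> real"
    and n :: nat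
  assumes almost_contact: "almost_contact_B_metric n U Phi Xi Eta G"
    and sasaki: "sasaki_like U Phi Xi Eta G"
begin

lemma card_UNIV: "CARD('m) = 2 * n + 1"
  using almost_contact unfolding almost_contact_B_metric_def by blast

lemma
  shows smooth_Phi: "smooth_chart U (\<lambda>p. Phi p i j)"
    and smooth_Xi: "smooth_chart U (\<lambda>p. Xi p i)"
    and smooth_Eta: "smooth_chart U (\<lambda>p. Eta p i)"
  using almost_contact unfolding almost_contact_B_metric_def by blast+

lemma
  assumes "p \<in> U"
  shows Phi_Xi: "(\<Sum>j\<in>UNIV. Phi p i j * Xi p j) = 0"
    and Phi_Phi: "(\<Sum>k\<in>UNIV. Phi p i k * Phi p k j) = - kdelta i j + Eta p j * Xi p i"
    and Eta_Phi: "(\<Sum>i\<in>UNIV. Eta p i * Phi p i j) = 0"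
    and Eta_Xi: "(\<Sum>i\<in>UNIV. Eta p i * Xi p i) = 1"
    and G_Phi_Phi: "(\<Sum>a\<in>UNIV. \<Sum>b\<in>UNIV. G p a b * Phi p a i * Phi p b j) = - G p i j + Eta p i * Eta p j"
    and signature_G: "has_signature (G p) (n + 1) n"
  using almost_contact assms unfolding almost_contact_B_metric_def by blast+

lemma cov_deriv_Phi:
  "p \<in> U \<Longrightarrow> cov_deriv_11 G Phi p i k j = - G p i j * Xi p k - Eta p j * kdelta k i + 2 * Eta p i * Eta p j * Xi p k"
  using sasaki unfolding sasaki_like_def by blast

sublocale metric_chart U G
proof
  show "open U" "\<And>i j. smooth_chart U (\<lambda>p. G p i j)" "\<And>p i j. p \<in> U \<Longrightarrow> G p i j = G p j i"
    using almost_contact unfolding almost_contact_B_metric_def by blast+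
  show "\<And>p. p \<in> U \<Longrightarrow> det (\<chi> i j. G p i j) \<noteq> 0"
    using has_signature_det_nonzero signature_G by blast
qed

lemma
  assumes "p \<in> U"
  shows Phi_differentiable: "(\<lambda>q. Phi q i j) differentiable (at p)"
    and Xi_differentiable: "(\<lambda>q. Xi q i) differentiable (at p)"
    and Eta_differentiable: "(\<lambda>q. Eta q i) differentiable (at p)"
    and pd_Xi_differentiable: "pd (\<lambda>q. Xi q i) k differentiable (at p)"
  using assms smooth_chart_differentiable[OF open_U] smooth_Phi smooth_Xi smooth_Eta
    smooth_chart_pd[OF smooth_Xi] by blast+

lemma G_Xi:
  assumes "p \<in> U"
  shows "(\<Sum>j\<in>UNIV. G p i j * Xi p j) = Eta p i"
proof -
  have "(\<Sum>j\<in>UNIV. (\<Sum>a\<in>UNIV. \<Sum>b\<in>UNIV. G p a b * Phi p a i * Phi p b j) * Xi p j)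
      = (\<Sum>a\<in>UNIV. \<Sum>b\<in>UNIV. G p a b * Phi p a i * (\<Sum>j\<in>UNIV. Phi p b j * Xi p j))"
    unfolding sum_distrib_right sum_distrib_left by (subst sum_swap3) (simp add: mult_ac)
  also have "\<dots> = 0"
    using Phi_Xi[OF assms] by simp
  finally have "(\<Sum>j\<in>UNIV. (- G p i j + Eta p i * Eta p j) * Xi p j) = 0"
    using G_Phi_Phi[OF assms] by simp
  moreover have "(\<Sum>j\<in>UNIV. (- G p i j + Eta p i * Eta p j) * Xi p j)
      = - (\<Sum>j\<in>UNIV. G p i j * Xi p j) + Eta p i * (\<Sum>j\<in>UNIV. Eta p j * Xi p j)"
    by (simp add: ring_distribs sum.distrib sum_subtractf sum_negf sum_distrib_left mult.assoc)
  ultimately show ?thesis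
    using Eta_Xi[OF assms] by simp
qed

lemma Xi_G:
  assumes "p \<in> U"
  shows "(\<Sum>k\<in>UNIV. Xi p k * G p k m) = Eta p m"
  using G_Xi[OF assms, of m] G_sym[OF assms] by (simp add: mult.commute)

lemma Eta_cancel:
  assumes "p \<in> U" and "\<And>j. a * Eta p j = b * Eta p j"
  shows "a = b"
proof -
  have "a * (\<Sum>j\<in>UNIV. Eta p j * Xi p j) = (\<Sum>j\<in>UNIV. (a * Eta p j) * Xi p j)"
    by (simp add: sum_distrib_left mult.assoc)
  also have "\<dots> = (\<Sum>j\<in>UNIV. (b * Eta p j) * Xi p j)"
    by (simp only: assms(2))
  also have "\<dots> = b * (\<Sum>j\<in>UNIV. Eta p j * Xi p j)"
    by (simp add: sum_distrib_left mult.assoc)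
  finally show ?thesis
    using Eta_Xi[OF assms(1)] by simp
qed

lemma pd_Eta_cov_deriv_Xi:
  assumes p: "p \<in> U"
  shows "pd (\<lambda>q. Eta q k) i p
       = (\<Sum>m\<in>UNIV. \<Gamma> p m i k * Eta p m) + (\<Sum>l\<in>UNIV. G p k l * cov_deriv_10 G Xi p i l)"
proof -
  have "pd (\<lambda>q. Eta q k) i p = pd (\<lambda>q. \<Sum>l\<in>UNIV. G q k l * Xi q l) i p"
    by (rule pd_cong_open[OF open_U p]) (simp add: G_Xi)
  also have "\<dots> = (\<Sum>m\<in>UNIV. \<Gamma> p m i k * Eta p m) + (\<Sum>l\<in>UNIV. G p k l * cov_deriv_10 G Xi p i l)"
    by (simp add: pd_lower_index Xi_differentiable G_Xi p)
  finally show ?thesis .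
qed

text \<open>Differentiating \<open>\<eta>(\<xi>) = g(\<xi>, \<xi>) = 1\<close>.\<close>
lemma Eta_cov_deriv_Xi:
  assumes p: "p \<in> U"
  shows "(\<Sum>l\<in>UNIV. Eta p l * cov_deriv_10 G Xi p i l) = 0"
proof -
  let ?\<Gamma>\<eta>\<xi> = "\<Sum>k\<in>UNIV. \<Sum>m\<in>UNIV. \<Gamma> p m i k * Eta p m * Xi p k"
  let ?D\<xi> = "cov_deriv_10 G Xi p i"
  have "0 = pd (\<lambda>q. \<Sum>k\<in>UNIV. Eta q k * Xi q k) i p"
    using pd_eq_0_if_constant_on[OF open_U p, of "\<lambda>q. \<Sum>k\<in>UNIV. Eta q k * Xi q k" 1] Eta_Xi by simp
  also have "\<dots> = (\<Sum>k\<in>UNIV. pd (\<lambda>q. Eta q k) i p * Xi p k) + (\<Sum>k\<in>UNIV. Eta p k * pd (\<lambda>q. Xi q k) i p)"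
    by (simp add: pd_sum pd_mult Eta_differentiable Xi_differentiable p sum.distrib)
  also have "(\<Sum>k\<in>UNIV. pd (\<lambda>q. Eta q k) i p * Xi p k)
      = ?\<Gamma>\<eta>\<xi> + (\<Sum>k\<in>UNIV. \<Sum>l\<in>UNIV. Xi p k * G p k l * ?D\<xi> l)"
    by (simp add: pd_Eta_cov_deriv_Xi p algebra_simps sum.distrib sum_distrib_left sum_distrib_right)
  also have "(\<Sum>k\<in>UNIV. \<Sum>l\<in>UNIV. Xi p k * G p k l * ?D\<xi> l) = (\<Sum>l\<in>UNIV. Eta p l * ?D\<xi> l)"
    by (subst sum.swap) (simp add: sum_distrib_right[symmetric] Xi_G p)
  also have "(\<Sum>k\<in>UNIV. Eta p k * pd (\<lambda>q. Xi q k) i p)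
      = (\<Sum>k\<in>UNIV. Eta p k * ?D\<xi> k) - (\<Sum>m\<in>UNIV. \<Sum>k\<in>UNIV. Eta p m * \<Gamma> p m i k * Xi p k)"
    unfolding cov_deriv_10_def by (simp add: algebra_simps sum.distrib sum_distrib_left)
  also have "(\<Sum>m\<in>UNIV. \<Sum>k\<in>UNIV. Eta p m * \<Gamma> p m i k * Xi p k) = ?\<Gamma>\<eta>\<xi>"
    by (subst sum.swap) (simp add: mult_ac)
  finally show ?thesis
    by simp
qed

lemma cov_deriv_Phi_Xi:
  assumes p: "p \<in> U"
  shows "(\<Sum>j\<in>UNIV. cov_deriv_11 G Phi p i k j * Xi p j) = Eta p i * Xi p k - kdelta k i"
proof -
  have "(\<Sum>j\<in>UNIV. cov_deriv_11 G Phi p i k j * Xi p j)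
      = - Xi p k * (\<Sum>j\<in>UNIV. G p i j * Xi p j) - kdelta k i * (\<Sum>j\<in>UNIV. Eta p j * Xi p j)
        + 2 * Eta p i * Xi p k * (\<Sum>j\<in>UNIV. Eta p j * Xi p j)"
    by (simp add: cov_deriv_Phi p algebra_simps sum.distrib sum_subtractf sum_distrib_left sum_negf)
  then show ?thesis
    by (simp add: G_Xi Eta_Xi p)
qed

text \<open>Differentiating \<open>\<phi>\<xi> = 0\<close> gives \<open>\<phi>(\<nabla>\<xi>) = -(\<nabla>\<phi>)\<xi>\<close>.\<close>
lemma Phi_cov_deriv_Xi:
  assumes p: "p \<in> U"
  shows "(\<Sum>l\<in>UNIV. Phi p k l * cov_deriv_10 G Xi p i l) = kdelta k i - Eta p i * Xi p k"
proof -
  have "0 = pd (\<lambda>q. \<Sum>j\<in>UNIV. Phi q k j * Xi q j) i p"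
    using pd_eq_0_if_constant_on[OF open_U p, of "\<lambda>q. \<Sum>j\<in>UNIV. Phi q k j * Xi q j" 0] Phi_Xi by simp
  also have "\<dots> = (\<Sum>j\<in>UNIV. pd (\<lambda>q. Phi q k j) i p * Xi p j) + (\<Sum>j\<in>UNIV. Phi p k j * pd (\<lambda>q. Xi q j) i p)"
    by (simp add: pd_sum pd_mult Phi_differentiable Xi_differentiable p sum.distrib)
  finally have d: "(\<Sum>j\<in>UNIV. pd (\<lambda>q. Phi q k j) i p * Xi p j) = - (\<Sum>j\<in>UNIV. Phi p k j * pd (\<lambda>q. Xi q j) i p)"
    by simp
  have \<Gamma>\<phi>\<xi>: "(\<Sum>j\<in>UNIV. \<Sum>l\<in>UNIV. \<Gamma> p k i l * Phi p l j * Xi p j) = 0"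
    by (subst sum.swap) (simp add: mult.assoc sum_distrib_left[symmetric] Phi_Xi p)
  have \<Gamma>\<xi>: "(\<Sum>j\<in>UNIV. \<Sum>l\<in>UNIV. \<Gamma> p l i j * Phi p k l * Xi p j)
      = (\<Sum>l\<in>UNIV. Phi p k l * (\<Sum>j\<in>UNIV. \<Gamma> p l i j * Xi p j))"
    by (subst sum.swap) (simp add: sum_distrib_left mult_ac)
  have "(\<Sum>j\<in>UNIV. cov_deriv_11 G Phi p i k j * Xi p j)
      = (\<Sum>j\<in>UNIV. pd (\<lambda>q. Phi q k j) i p * Xi p j) + (\<Sum>j\<in>UNIV. \<Sum>l\<in>UNIV. \<Gamma> p k i l * Phi p l j * Xi p j)
        - (\<Sum>j\<in>UNIV. \<Sum>l\<in>UNIV. \<Gamma> p l i j * Phi p k l * Xi p j)"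
    unfolding cov_deriv_11_def
    by (simp add: algebra_simps sum.distrib sum_subtractf sum_distrib_right sum_distrib_left)
  also have "\<dots> = - (\<Sum>l\<in>UNIV. Phi p k l * cov_deriv_10 G Xi p i l)"
    unfolding d \<Gamma>\<phi>\<xi> \<Gamma>\<xi> cov_deriv_10_def by (simp add: algebra_simps sum.distrib)
  finally show ?thesis
    using cov_deriv_Phi_Xi[OF p, of i k] by simp
qed

lemma cov_deriv_Xi:
  assumes p: "p \<in> U"
  shows "cov_deriv_10 G Xi p i m = - Phi p m i"
proof -
  have "(\<Sum>k\<in>UNIV. Phi p m k * (kdelta k i - Eta p i * Xi p k))
      = (\<Sum>k\<in>UNIV. kdelta k i * Phi p m k) - Eta p i * (\<Sum>k\<in>UNIV. Phi p m k * Xi p k)"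
    by (simp add: algebra_simps sum_subtractf sum_distrib_left)
  then have "Phi p m i = (\<Sum>k\<in>UNIV. Phi p m k * (kdelta k i - Eta p i * Xi p k))"
    by (simp add: sum_kdelta_mult_sym Phi_Xi p)
  also have "\<dots> = (\<Sum>l\<in>UNIV. (\<Sum>k\<in>UNIV. Phi p m k * Phi p k l) * cov_deriv_10 G Xi p i l)"
    unfolding Phi_cov_deriv_Xi[OF p, symmetric]
    by (simp add: sum_distrib_left sum_distrib_right mult_ac) (rule sum.swap)
  also have "\<dots> = - cov_deriv_10 G Xi p i m + Xi p m * (\<Sum>l\<in>UNIV. Eta p l * cov_deriv_10 G Xi p i l)"
    unfolding Phi_Phi[OF p]
    by (simp add: algebra_simps sum.distrib sum_subtractf sum_negf sum_distrib_left sum_kdelta_mult)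
  finally show ?thesis
    by (simp add: Eta_cov_deriv_Xi p)
qed

lemma pd_Xi:
  "p \<in> U \<Longrightarrow> pd (\<lambda>q. Xi q k) i p = - Phi p k i - (\<Sum>l\<in>UNIV. \<Gamma> p k i l * Xi p l)"
  using cov_deriv_Xi[of p i k] unfolding cov_deriv_10_def by simp

lemma phi_form_sym:
  assumes p: "p \<in> U"
  shows "phi_form G Phi p i m = phi_form G Phi p m i"
proof -
  have "(\<Sum>j\<in>UNIV. (\<Sum>a\<in>UNIV. \<Sum>b\<in>UNIV. G p a b * Phi p a i * Phi p b j) * Phi p j m)
      = (\<Sum>a\<in>UNIV. \<Sum>b\<in>UNIV. G p a b * Phi p a i * (\<Sum>j\<in>UNIV. Phi p b j * Phi p j m))"
    unfolding sum_distrib_right sum_distrib_left by (subst sum_swap3) (simp add: mult_ac)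
  also have "\<dots> = - (\<Sum>a\<in>UNIV. \<Sum>b\<in>UNIV. kdelta b m * (G p a b * Phi p a i))
      + Eta p m * (\<Sum>a\<in>UNIV. Phi p a i * (\<Sum>b\<in>UNIV. G p a b * Xi p b))"
    unfolding Phi_Phi[OF p] by (simp add: algebra_simps sum.distrib sum_subtractf sum_negf sum_distrib_left)
  also have "\<dots> = - (\<Sum>a\<in>UNIV. G p a m * Phi p a i) + Eta p m * (\<Sum>a\<in>UNIV. Phi p a i * Eta p a)"
    by (simp add: sum_kdelta_mult_sym G_Xi p)
  also have "\<dots> = - phi_form G Phi p m i"
    using Eta_Phi[OF p, of i] G_sym[OF p] by (simp add: phi_form_def mult.commute)
  finally have "(\<Sum>j\<in>UNIV. (- G p i j + Eta p i * Eta p j) * Phi p j m) = - phi_form G Phi p m i"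
    unfolding G_Phi_Phi[OF p] .
  moreover have "(\<Sum>j\<in>UNIV. (- G p i j + Eta p i * Eta p j) * Phi p j m)
      = - phi_form G Phi p i m + Eta p i * (\<Sum>j\<in>UNIV. Eta p j * Phi p j m)"
    by (simp add: phi_form_def algebra_simps sum.distrib sum_subtractf sum_negf sum_distrib_left)
  ultimately show ?thesis
    by (simp add: Eta_Phi p)
qed

lemma phi_form_Xi: "p \<in> U \<Longrightarrow> (\<Sum>j\<in>UNIV. phi_form G Phi p i j * Xi p j) = 0"
  unfolding phi_form_def sum_distrib_right
  by (subst sum.swap) (simp add: mult.assoc sum_distrib_left[symmetric] Phi_Xi)

lemma horizontal_metric_Xi:
  assumes p: "p \<in> U"
  shows "(\<Sum>j\<in>UNIV. horizontal_metric G Eta p i j * Xi p j) = 0"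
proof -
  have "(\<Sum>j\<in>UNIV. horizontal_metric G Eta p i j * Xi p j)
      = (\<Sum>j\<in>UNIV. G p i j * Xi p j) - Eta p i * (\<Sum>j\<in>UNIV. Eta p j * Xi p j)"
    unfolding horizontal_metric_def by (simp add: algebra_simps sum_subtractf sum_distrib_left)
  then show ?thesis
    by (simp add: G_Xi Eta_Xi p)
qed

lemma horizontal_metric_Phi:
  assumes p: "p \<in> U"
  shows "(\<Sum>k\<in>UNIV. horizontal_metric G Eta p i k * Phi p k m) = phi_form G Phi p i m"
proof -
  have "(\<Sum>k\<in>UNIV. horizontal_metric G Eta p i k * Phi p k m)
      = phi_form G Phi p i m - Eta p i * (\<Sum>k\<in>UNIV. Eta p k * Phi p k m)"
    unfolding horizontal_metric_def phi_form_def by (simp add: algebra_simps sum_subtractf sum_distrib_left)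
  then show ?thesis
    by (simp add: Eta_Phi p)
qed

lemma phi_form_Phi:
  assumes p: "p \<in> U"
  shows "(\<Sum>k\<in>UNIV. phi_form G Phi p i k * Phi p k m) = - horizontal_metric G Eta p i m"
proof -
  have "(\<Sum>k\<in>UNIV. phi_form G Phi p i k * Phi p k m) = (\<Sum>l\<in>UNIV. G p i l * (\<Sum>k\<in>UNIV. Phi p l k * Phi p k m))"
    unfolding phi_form_def sum_distrib_right sum_distrib_left by (subst sum.swap) (simp add: mult_ac)
  also have "\<dots> = - (\<Sum>l\<in>UNIV. kdelta l m * G p i l) + Eta p m * (\<Sum>l\<in>UNIV. G p i l * Xi p l)"
    by (simp add: Phi_Phi p algebra_simps sum.distrib sum_subtractf sum_negf sum_distrib_left)
  finally show ?thesis
    by (simp add: sum_kdelta_mult_sym G_Xi p horizontal_metric_def)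
qed

text \<open>In dimension one \<open>g = \<eta>\<otimes>\<eta>\<close>, hence the hypothesis \<open>n \<ge> 1\<close>.\<close>
lemma horizontal_metric_nonzero:
  assumes p: "p \<in> U" and "n \<ge> 1"
  shows "\<exists>i k. horizontal_metric G Eta p i k \<noteq> 0"
proof (rule ccontr)
  assume "\<not> (\<exists>i k. horizontal_metric G Eta p i k \<noteq> 0)"
  then have G_Eta: "G p i k = Eta p i * Eta p k" for i k
    unfolding horizontal_metric_def by auto
  define w where "w k = (\<Sum>l\<in>UNIV. Eta p l * metric_inv G p l k)" for k
  have Eta_w: "Eta p i * w k = kdelta i k" for i k
    using G_metric_inv[OF p, of i k] unfolding w_def G_Eta by (simp add: sum_distrib_left mult_ac)
  have "CARD('m) \<ge> 2"
    using card_UNIV \<open>n \<ge> 1\<close> by simp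
  then obtain x y :: 'm where "x \<noteq> y"
    by (metis card_2_iff' card_le_Suc_iff numeral_2_eq_2 ex_in_conv UNIV_I finite_UNIV n_not_Suc_n)
  then show False
    using Eta_w[of x y] Eta_w[of x x] Eta_w[of y y] by (auto simp: kdelta_def)
qed

text \<open>\<open>\<phi>\<close> maps \<open>horizontal_metric\<close> to \<open>phi_form\<close> and \<open>phi_form\<close> to \<open>-horizontal_metric\<close>,
  so a vanishing combination \<open>a P + b h\<close> also gives \<open>a h - b P = 0\<close>, whence \<open>(a\<^sup>2 + b\<^sup>2) P = 0\<close>.\<close>
lemma horizontal_metric_phi_form_independent:
  assumes p: "p \<in> U" and "n \<ge> 1"
    and comb: "\<And>i k. a * horizontal_metric G Eta p i k + b * phi_form G Phi p i k = 0"
  shows "a = 0 \<and> b = 0"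
proof -
  have rotated: "a * phi_form G Phi p i m - b * horizontal_metric G Eta p i m = 0" for i m
  proof -
    have "(\<Sum>k\<in>UNIV. (a * horizontal_metric G Eta p i k + b * phi_form G Phi p i k) * Phi p k m)
        = a * (\<Sum>k\<in>UNIV. horizontal_metric G Eta p i k * Phi p k m) + b * (\<Sum>k\<in>UNIV. phi_form G Phi p i k * Phi p k m)"
      by (simp add: algebra_simps sum.distrib sum_distrib_left)
    also have "\<dots> = a * phi_form G Phi p i m - b * horizontal_metric G Eta p i m"
      by (simp add: horizontal_metric_Phi phi_form_Phi p)
    finally show ?thesis
      by (simp add: comb)
  qed
  obtain i m where "horizontal_metric G Eta p i m \<noteq> 0"
    using horizontal_metric_nonzero[OF p \<open>n \<ge> 1\<close>] by blast
  moreover have "(a * a + b * b) * horizontal_metric G Eta p i m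
      = a * (a * horizontal_metric G Eta p i m + b * phi_form G Phi p i m)
        - b * (a * phi_form G Phi p i m - b * horizontal_metric G Eta p i m)"
    by (simp add: algebra_simps)
  ultimately have "a * a + b * b = 0"
    using comb[of i m] rotated[of i m] by simp
  then show ?thesis
    by (simp add: sum_squares_eq_zero_iff)
qed

lemma pd_cov_deriv_Xi:
  assumes p: "p \<in> U"
  shows "pd (pd (\<lambda>q. Xi q l) a) b p
       + (\<Sum>m\<in>UNIV. pd (\<lambda>q. \<Gamma> q l a m) b p * Xi p m + \<Gamma> p l a m * pd (\<lambda>q. Xi q m) b p)
     = - pd (\<lambda>q. Phi q l a) b p"
proof -
  have "pd (\<lambda>q. pd (\<lambda>q. Xi q l) a q + (\<Sum>m\<in>UNIV. \<Gamma> q l a m * Xi q m)) b p = pd (\<lambda>q. - Phi q l a) b p"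
    by (rule pd_cong_open[OF open_U p]) (simp add: pd_Xi)
  moreover have "pd (\<lambda>q. pd (\<lambda>q. Xi q l) a q + (\<Sum>m\<in>UNIV. \<Gamma> q l a m * Xi q m)) b p
      = pd (pd (\<lambda>q. Xi q l) a) b p
        + (\<Sum>m\<in>UNIV. pd (\<lambda>q. \<Gamma> q l a m) b p * Xi p m + \<Gamma> p l a m * pd (\<lambda>q. Xi q m) b p)"
    by (simp add: pd_add pd_sum pd_mult pd_Xi_differentiable christoffel_differentiable Xi_differentiable p)
  ultimately show ?thesis
    by (simp add: pd_minus Phi_differentiable p)
qed

text \<open>The Ricci identity for \<open>\<xi>\<close>, using \<open>\<nabla>\<xi> = -\<phi>\<close>; the second derivatives of \<open>\<xi>\<close>
  cancel by symmetry of second partial derivatives.\<close>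
lemma ricci_Xi_eq_trace_minus_divergence:
  assumes p: "p \<in> U"
  shows "(\<Sum>k\<in>UNIV. ricci G p j k * Xi p k)
       = (\<Sum>l\<in>UNIV. cov_deriv_11 G Phi p j l l) - (\<Sum>l\<in>UNIV. cov_deriv_11 G Phi p l l j)"
proof -
  define A1 where "A1 = (\<Sum>l\<in>UNIV. pd (pd (\<lambda>q. Xi q l) j) l p)"
  define A2 where "A2 = (\<Sum>l\<in>UNIV. pd (pd (\<lambda>q. Xi q l) l) j p)"
  define B1 where "B1 = (\<Sum>l\<in>UNIV. \<Sum>m\<in>UNIV. pd (\<lambda>q. \<Gamma> q l j m) l p * Xi p m)"
  define B2 where "B2 = (\<Sum>l\<in>UNIV. \<Sum>m\<in>UNIV. pd (\<lambda>q. \<Gamma> q l l m) j p * Xi p m)"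
  define C1 where "C1 = (\<Sum>l\<in>UNIV. \<Sum>m\<in>UNIV. \<Gamma> p l j m * pd (\<lambda>q. Xi q m) l p)"
  define C2 where "C2 = (\<Sum>l\<in>UNIV. \<Sum>m\<in>UNIV. \<Gamma> p l l m * pd (\<lambda>q. Xi q m) j p)"
  define F1 where "F1 = (\<Sum>l\<in>UNIV. pd (\<lambda>q. Phi q l j) l p)"
  define F2 where "F2 = (\<Sum>l\<in>UNIV. pd (\<lambda>q. Phi q l l) j p)"
  define E1 where "E1 = (\<Sum>l\<in>UNIV. \<Sum>m\<in>UNIV. \<Gamma> p l j m * Phi p m l)"
  define E3 where "E3 = (\<Sum>l\<in>UNIV. \<Sum>m\<in>UNIV. \<Gamma> p l l m * Phi p m j)"
  define Q1 where "Q1 = (\<Sum>l\<in>UNIV. \<Sum>m\<in>UNIV. \<Sum>s\<in>UNIV. \<Gamma> p l j m * \<Gamma> p m l s * Xi p s)"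
  define Q2 where "Q2 = (\<Sum>l\<in>UNIV. \<Sum>m\<in>UNIV. \<Sum>s\<in>UNIV. \<Gamma> p l l m * \<Gamma> p m j s * Xi p s)"
  have "(\<Sum>l\<in>UNIV. pd (pd (\<lambda>q. Xi q l) j) l p
      + (\<Sum>m\<in>UNIV. pd (\<lambda>q. \<Gamma> q l j m) l p * Xi p m + \<Gamma> p l j m * pd (\<lambda>q. Xi q m) l p))
      = (\<Sum>l\<in>UNIV. - pd (\<lambda>q. Phi q l j) l p)"
    by (rule sum.cong[OF refl]) (rule pd_cov_deriv_Xi[OF p])
  then have "A1 + B1 + C1 = - F1"
    unfolding A1_def B1_def C1_def F1_def by (simp add: sum.distrib sum_negf)
  moreover have "(\<Sum>l\<in>UNIV. pd (pd (\<lambda>q. Xi q l) l) j p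
      + (\<Sum>m\<in>UNIV. pd (\<lambda>q. \<Gamma> q l l m) j p * Xi p m + \<Gamma> p l l m * pd (\<lambda>q. Xi q m) j p))
      = (\<Sum>l\<in>UNIV. - pd (\<lambda>q. Phi q l l) j p)"
    by (rule sum.cong[OF refl]) (rule pd_cov_deriv_Xi[OF p])
  then have "A2 + B2 + C2 = - F2"
    unfolding A2_def B2_def C2_def F2_def by (simp add: sum.distrib sum_negf)
  moreover have "A1 = A2"
    unfolding A1_def A2_def using smooth_chart_pd_pd_commute[OF open_U p smooth_Xi] by simp
  moreover have "C1 = - E1 - Q1" "C2 = - E3 - Q2"
    unfolding C1_def C2_def E1_def E3_def Q1_def Q2_def pd_Xi[OF p]
    by (simp_all add: algebra_simps sum.distrib sum_subtractf sum_negf sum_distrib_left)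
  moreover have "(\<Sum>l\<in>UNIV. cov_deriv_11 G Phi p j l l) = F2"
    unfolding F2_def by (rule trace_cov_deriv_11)
  moreover have "(\<Sum>l\<in>UNIV. cov_deriv_11 G Phi p l l j) = F1 + E3 - E1"
  proof -
    have "(\<Sum>l\<in>UNIV. \<Sum>m\<in>UNIV. \<Gamma> p m l j * Phi p l m) = E1"
      unfolding E1_def by (subst sum.swap) (simp add: christoffel_sym[OF p, of _ _ j])
    then show ?thesis
      unfolding cov_deriv_11_def F1_def E3_def by (simp add: sum.distrib sum_subtractf)
  qed
  moreover have "(\<Sum>k\<in>UNIV. ricci G p j k * Xi p k) = B1 - B2 + Q2 - Q1"
    unfolding B1_def B2_def Q1_def Q2_def by (rule sum_ricci_mult)
  ultimately show ?thesis
    by linarith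
qed

lemma trace_cov_deriv_Phi:
  assumes p: "p \<in> U"
  shows "(\<Sum>l\<in>UNIV. cov_deriv_11 G Phi p j l l) = 0"
proof -
  have "(\<Sum>l\<in>UNIV. cov_deriv_11 G Phi p j l l)
      = - (\<Sum>l\<in>UNIV. G p j l * Xi p l) - (\<Sum>l\<in>UNIV. kdelta l j * Eta p l)
        + 2 * Eta p j * (\<Sum>l\<in>UNIV. Eta p l * Xi p l)"
    by (simp add: cov_deriv_Phi p algebra_simps sum.distrib sum_subtractf sum_negf sum_distrib_left)
  then show ?thesis
    by (simp add: G_Xi Eta_Xi sum_kdelta_mult_sym p)
qed

lemma divergence_Phi:
  assumes p: "p \<in> U"
  shows "(\<Sum>l\<in>UNIV. cov_deriv_11 G Phi p l l j) = - 2 * real n * Eta p j"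
proof -
  have "(\<Sum>l\<in>UNIV. cov_deriv_11 G Phi p l l j)
      = - (\<Sum>l\<in>UNIV. Xi p l * G p l j) - Eta p j * (\<Sum>l\<in>UNIV. kdelta l (l::'m))
        + 2 * Eta p j * (\<Sum>l\<in>UNIV. Eta p l * Xi p l)"
    by (simp add: cov_deriv_Phi p algebra_simps sum.distrib sum_subtractf sum_negf sum_distrib_left)
  moreover have "(\<Sum>l\<in>UNIV. kdelta l (l::'m)) = 2 * real n + 1"
    using card_UNIV by (simp add: kdelta_def)
  ultimately show ?thesis
    by (simp add: Xi_G Eta_Xi p algebra_simps)
qed

lemma ricci_Xi: "p \<in> U \<Longrightarrow> (\<Sum>k\<in>UNIV. ricci G p j k * Xi p k) = 2 * real n * Eta p j"
  by (simp add: ricci_Xi_eq_trace_minus_divergence trace_cov_deriv_Phi divergence_Phi)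

lemma lie_deriv_metric_Xi:
  assumes p: "p \<in> U"
  shows "lie_deriv_metric G Xi p i j = - 2 * phi_form G Phi p i j"
proof -
  have "lie_deriv_metric G Xi p i j = - phi_form G Phi p j i - phi_form G Phi p i j"
    unfolding lie_deriv_metric_cov_deriv[OF p] cov_deriv_Xi[OF p] phi_form_def
    using G_sym[OF p] by (simp add: sum.distrib sum_subtractf sum_negf mult.commute)
  then show ?thesis
    by (simp add: phi_form_sym[OF p, of j i])
qed

lemma pd_Eta: "p \<in> U \<Longrightarrow> pd (\<lambda>q. Eta q k) i p = (\<Sum>m\<in>UNIV. \<Gamma> p m i k * Eta p m) - phi_form G Phi p i k"
  using phi_form_sym[of p k i]
  by (simp add: pd_Eta_cov_deriv_Xi cov_deriv_Xi phi_form_def sum_negf)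

lemma
  assumes "p \<in> U"
  shows phi_form_differentiable: "(\<lambda>q. phi_form G Phi q i j) differentiable (at p)"
    and horizontal_metric_differentiable: "(\<lambda>q. horizontal_metric G Eta q i j) differentiable (at p)"
  unfolding phi_form_def horizontal_metric_def
  using assms by (simp_all add: G_differentiable Phi_differentiable Eta_differentiable)

lemma cov_deriv_02_horizontal_metric:
  assumes p: "p \<in> U"
  shows "cov_deriv_02 G (horizontal_metric G Eta) p i j k
       = phi_form G Phi p i j * Eta p k + phi_form G Phi p i k * Eta p j"
proof -
  have "cov_deriv_02 G (horizontal_metric G Eta) p i j k
      = cov_deriv_02 G G p i j k - (pd (\<lambda>q. Eta q j * Eta q k) i p
        - (\<Sum>l\<in>UNIV. \<Gamma> p l i j * (Eta p l * Eta p k) + \<Gamma> p l i k * (Eta p j * Eta p l)))"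
    unfolding cov_deriv_02_def horizontal_metric_def
    by (simp add: pd_diff G_differentiable Eta_differentiable p algebra_simps sum.distrib sum_subtractf)
  also have "pd (\<lambda>q. Eta q j * Eta q k) i p = pd (\<lambda>q. Eta q j) i p * Eta p k + Eta p j * pd (\<lambda>q. Eta q k) i p"
    by (simp add: pd_mult Eta_differentiable p)
  finally show ?thesis
    by (simp add: cov_deriv_02_G pd_Eta p algebra_simps sum.distrib sum_subtractf sum_distrib_left sum_distrib_right)
qed

lemma cov_deriv_02_phi_form:
  assumes p: "p \<in> U"
  shows "cov_deriv_02 G (phi_form G Phi) p i j k
       = - (horizontal_metric G Eta p i k * Eta p j + horizontal_metric G Eta p i j * Eta p k)"
proof -
  have "cov_deriv_02 G (phi_form G Phi) p i j k = (\<Sum>l\<in>UNIV. G p j l * cov_deriv_11 G Phi p i l k)"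
    unfolding phi_form_def[abs_def] by (rule cov_deriv_02_lower_index[OF p Phi_differentiable[OF p]])
  also have "\<dots> = - G p i k * (\<Sum>l\<in>UNIV. G p j l * Xi p l) - Eta p k * (\<Sum>l\<in>UNIV. kdelta l i * G p j l)
      + 2 * Eta p i * Eta p k * (\<Sum>l\<in>UNIV. G p j l * Xi p l)"
    by (simp add: cov_deriv_Phi p algebra_simps sum.distrib sum_subtractf sum_negf sum_distrib_left)
  also have "\<dots> = - G p i k * Eta p j - Eta p k * G p j i + 2 * Eta p i * Eta p k * Eta p j"
    by (simp add: G_Xi sum_kdelta_mult_sym p)
  finally show ?thesis
    using G_sym[OF p, of j i] by (simp add: horizontal_metric_def algebra_simps)
qed

section \<open>Ricci-like solitons with potential \<open>\<xi>\<close>\<close>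

lemma soliton_ricci:
  assumes sol: "ricci_like_soliton U G Phi Eta Xi lam mu nu" and p: "p \<in> U"
  shows "ricci G p i j = - lam * G p i j + (1 - mu) * phi_form G Phi p i j - (mu + nu) * (Eta p i * Eta p j)"
proof -
  have "lie_deriv_metric G Xi p i j / 2 + ricci G p i j + lam * G p i j
      + mu * assoc_metric G Phi Eta p i j + nu * Eta p i * Eta p j = 0"
    using sol p unfolding ricci_like_soliton_def by simp
  moreover have "assoc_metric G Phi Eta p i j = phi_form G Phi p i j + Eta p i * Eta p j"
    unfolding assoc_metric_def phi_form_def ..
  ultimately show ?thesis
    by (simp add: lie_deriv_metric_Xi p algebra_simps)
qed

lemma soliton_constants:
  assumes sol: "ricci_like_soliton U G Phi Eta Xi lam mu nu" and p: "p \<in> U"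
  shows "lam + mu + nu = - 2 * real n"
proof -
  have "(- lam - (mu + nu)) * Eta p j = 2 * real n * Eta p j" for j
  proof -
    have "(\<Sum>k\<in>UNIV. ricci G p j k * Xi p k)
        = - lam * (\<Sum>k\<in>UNIV. G p j k * Xi p k) + (1 - mu) * (\<Sum>k\<in>UNIV. phi_form G Phi p j k * Xi p k)
          - (mu + nu) * Eta p j * (\<Sum>k\<in>UNIV. Eta p k * Xi p k)"
      by (simp add: soliton_ricci[OF sol p] algebra_simps sum.distrib sum_subtractf sum_negf sum_distrib_left)
    then have "2 * real n * Eta p j = - lam * Eta p j - (mu + nu) * Eta p j"
      by (simp add: G_Xi phi_form_Xi Eta_Xi ricci_Xi p)
    then show ?thesis
      by (simp add: algebra_simps)
  qed
  then have "- lam - (mu + nu) = 2 * real n"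
    by (rule Eta_cancel[OF p])
  then show ?thesis
    by simp
qed

lemma soliton_ricci_horizontal:
  assumes sol: "ricci_like_soliton U G Phi Eta Xi lam mu nu" and p: "p \<in> U"
  shows "ricci G p i j = 2 * real n * G p i j + (mu + nu) * horizontal_metric G Eta p i j
      + (1 - mu) * phi_form G Phi p i j"
proof -
  have lam: "lam = - 2 * real n - mu - nu"
    using soliton_constants[OF sol p] by simp
  show ?thesis
    unfolding soliton_ricci[OF sol p] horizontal_metric_def lam by (simp add: algebra_simps)
qed

lemma cov_deriv_ricci:
  assumes sol: "ricci_like_soliton U G Phi Eta Xi lam mu nu" and p: "p \<in> U"
  shows "cov_deriv_02 G (ricci G) p i j k
       = (mu + nu) * (phi_form G Phi p i j * Eta p k + phi_form G Phi p i k * Eta p j)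
         - (1 - mu) * (horizontal_metric G Eta p i k * Eta p j + horizontal_metric G Eta p i j * Eta p k)"
proof -
  have "cov_deriv_02 G (ricci G) p i j k
      = cov_deriv_02 G (\<lambda>q j k. (2 * real n * G q j k + (mu + nu) * horizontal_metric G Eta q j k)
          + (1 - mu) * phi_form G Phi q j k) p i j k"
    by (rule cov_deriv_02_cong_open[OF open_U p]) (simp add: soliton_ricci_horizontal[OF sol])
  also have "\<dots> = 2 * real n * cov_deriv_02 G G p i j k
      + (mu + nu) * cov_deriv_02 G (horizontal_metric G Eta) p i j k
      + (1 - mu) * cov_deriv_02 G (phi_form G Phi) p i j k"
    using p by (simp add: cov_deriv_02_add cov_deriv_02_cmult G_differentiable
        horizontal_metric_differentiable phi_form_differentiable)
  finally show ?thesis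
    by (simp add: cov_deriv_02_G cov_deriv_02_horizontal_metric cov_deriv_02_phi_form p algebra_simps)
qed

lemma locally_ricci_symmetric_iff:
  assumes sol: "ricci_like_soliton U G Phi Eta Xi lam mu nu" and "U \<noteq> {}" and "n \<ge> 1"
  shows "locally_ricci_symmetric U G \<longleftrightarrow> mu = 1 \<and> nu = -1"
proof
  assume symmetric: "locally_ricci_symmetric U G"
  obtain p where p: "p \<in> U"
    using \<open>U \<noteq> {}\<close> by blast
  have "- (1 - mu) * horizontal_metric G Eta p i k + (mu + nu) * phi_form G Phi p i k = 0" for i k
  proof -
    have "0 = (\<Sum>j\<in>UNIV. cov_deriv_02 G (ricci G) p i j k * Xi p j)"
      using symmetric p unfolding locally_ricci_symmetric_def by simp
    also have "\<dots> = (mu + nu) * (Eta p k * (\<Sum>j\<in>UNIV. phi_form G Phi p i j * Xi p j)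
          + phi_form G Phi p i k * (\<Sum>j\<in>UNIV. Eta p j * Xi p j))
        - (1 - mu) * (horizontal_metric G Eta p i k * (\<Sum>j\<in>UNIV. Eta p j * Xi p j)
          + Eta p k * (\<Sum>j\<in>UNIV. horizontal_metric G Eta p i j * Xi p j))"
      by (simp add: cov_deriv_ricci[OF sol p] algebra_simps sum.distrib sum_subtractf sum_distrib_left)
    also have "\<dots> = (mu + nu) * phi_form G Phi p i k - (1 - mu) * horizontal_metric G Eta p i k"
      by (simp add: phi_form_Xi horizontal_metric_Xi Eta_Xi p)
    finally show ?thesis
      by linarith
  qed
  then have "- (1 - mu) = 0 \<and> mu + nu = 0"
    by (rule horizontal_metric_phi_form_independent[OF p \<open>n \<ge> 1\<close>])
  then show "mu = 1 \<and> nu = -1"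
    by simp
next
  assume "mu = 1 \<and> nu = -1"
  then show "locally_ricci_symmetric U G"
    unfolding locally_ricci_symmetric_def by (simp add: cov_deriv_ricci[OF sol])
qed

lemma einstein_iff:
  assumes sol: "ricci_like_soliton U G Phi Eta Xi lam mu nu" and "U \<noteq> {}" and "n \<ge> 1"
  shows "einstein U G \<longleftrightarrow> mu = 1 \<and> nu = -1"
proof
  assume "einstein U G"
  then obtain c where c: "\<And>q i j. q \<in> U \<Longrightarrow> ricci G q i j = c * G q i j"
    unfolding einstein_def by blast
  obtain p where p: "p \<in> U"
    using \<open>U \<noteq> {}\<close> by blast
  have comb: "(2 * real n - c) * G p i k + (mu + nu) * horizontal_metric G Eta p i k
      + (1 - mu) * phi_form G Phi p i k = 0" for i k
    using c[OF p, of i k] soliton_ricci_horizontal[OF sol p, of i k] by (simp add: algebra_simps)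
  have "c * Eta p i = 2 * real n * Eta p i" for i
  proof -
    have "0 = (\<Sum>k\<in>UNIV. ((2 * real n - c) * G p i k + (mu + nu) * horizontal_metric G Eta p i k
        + (1 - mu) * phi_form G Phi p i k) * Xi p k)"
      by (simp add: comb)
    also have "\<dots> = (2 * real n - c) * (\<Sum>k\<in>UNIV. G p i k * Xi p k)
        + (mu + nu) * (\<Sum>k\<in>UNIV. horizontal_metric G Eta p i k * Xi p k)
        + (1 - mu) * (\<Sum>k\<in>UNIV. phi_form G Phi p i k * Xi p k)"
      by (simp add: distrib_right sum.distrib sum_distrib_left mult.assoc)
    also have "\<dots> = (2 * real n - c) * Eta p i"
      by (simp add: G_Xi horizontal_metric_Xi phi_form_Xi p)
    finally show ?thesis
      by (simp add: algebra_simps)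
  qed
  then have "c = 2 * real n"
    by (rule Eta_cancel[OF p])
  then have "(mu + nu) * horizontal_metric G Eta p i k + (1 - mu) * phi_form G Phi p i k = 0" for i k
    using comb[of i k] by simp
  then have "mu + nu = 0 \<and> 1 - mu = 0"
    by (rule horizontal_metric_phi_form_independent[OF p \<open>n \<ge> 1\<close>])
  then show "mu = 1 \<and> nu = -1"
    by simp
next
  assume "mu = 1 \<and> nu = -1"
  then show "einstein U G"
    unfolding einstein_def by (auto simp: soliton_ricci_horizontal[OF sol])
qed

end

theorem mainTheorem3:
  fixes U :: "(real^'m::finite) set"
    and G Phi :: "real^'m \<Rightarrow> 'm \<Rightarrow> 'm \<Rightarrow> real"
    and Xi Eta :: "real^'m \<Rightarrow> 'm \<Rightarrow> real"
    and n :: nat and lam mu nu :: real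
  assumes "n \<ge> 1" and "U \<noteq> {}"
    and "almost_contact_B_metric n U Phi Xi Eta G"
    and "sasaki_like U Phi Xi Eta G"
    and "ricci_like_soliton U G Phi Eta Xi lam mu nu"
  shows "(locally_ricci_symmetric U G \<longleftrightarrow> (lam, mu, nu) = (- 2 * real n, 1, -1))
       \<and> (locally_ricci_symmetric U G \<longleftrightarrow> einstein U G)"
proof -
  interpret sasaki_like_chart U G Phi Xi Eta n
    using assms(3,4) by unfold_locales
  obtain p where "p \<in> U"
    using assms(2) by blast
  then have "lam + mu + nu = - 2 * real n"
    by (rule soliton_constants[OF assms(5)])
  then have "(lam, mu, nu) = (- 2 * real n, 1, -1) \<longleftrightarrow> mu = 1 \<and> nu = -1"
    by auto
  then show ?thesis
    using locally_ricci_symmetric_iff[OF assms(5,2,1)] einstein_iff[OF assms(5,2,1)] by simp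
qed

end
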